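(* Let $(n_1,\dots,n_r)$ be an ordered partition of $p$ and let $\mathcal{Z}\subset\mathrm{Sym}(p)$ be a linear subspace such that $\mathrm{BlockDiag}(x)\mathrm{BlockDiag}(y)\in\mathcal{Z}$ for all $x,y\in\mathcal{Z}$. Then for all $x,y\in\mathcal{Z}$, $\mathrm{BlockDiag}(x)\mathrm{BlockDiag}(y)=\mathrm{BlockDiag}(y)\mathrm{BlockDiag}(x)$.
   Context: $\mathrm{Sym}(p)$ is the space of real symmetric $p\times p$ matrices. For $x\in\mathrm{Sym}(p)$ written in blocks $X_{kh}\in\mathbb{R}^{n_k\times n_h}$ according to the partition, $\mathrm{BlockDiag}(x)$ is the block-diagonal matrix with diagonal blocks $X_{11},\dots,X_{rr}$ and zero off-diagonal blocks. *)

theory Defs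
  imports "Jordan_Normal_Form.Matrix"
begin

definition Sym :: "nat \<Rightarrow> real mat set" where
  "Sym p = {A. A \<in> carrier_mat p p \<and> transpose_mat A = A}"

definition ordered_partition :: "nat list \<Rightarrow> nat \<Rightarrow> bool" where
  "ordered_partition ns p \<longleftrightarrow> (\<forall>n\<in>set ns. 0 < n) \<and> sum_list ns = p"

text \<open>Index (0-based) of the block containing row/column index i (0-based):
  the k with n_1+...+n_k \<le> i < n_1+...+n_(k+1).\<close>
definition block_of :: "nat list \<Rightarrow> nat \<Rightarrow> nat" where
  "block_of ns i = (LEAST k. i < sum_list (take (Suc k) ns))"

definition BlockDiag :: "nat list \<Rightarrow> real mat \<Rightarrow> real mat" where
  "BlockDiag ns x = mat (dim_row x) (dim_col x)
     (\<lambda>(i, j). if block_of ns i = block_of ns j then x $$ (i, j) else 0)"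

definition linear_subspace :: "nat \<Rightarrow> real mat set \<Rightarrow> bool" where
  "linear_subspace p Z \<longleftrightarrow> Z \<subseteq> carrier_mat p p \<and> 0\<^sub>m p p \<in> Z \<and>
     (\<forall>x\<in>Z. \<forall>y\<in>Z. x + y \<in> Z) \<and> (\<forall>c. \<forall>x\<in>Z. c \<cdot>\<^sub>m x \<in> Z)"

end

theory Submission
  imports Defs
begin

text \<open>Block-diagonal parts of symmetric matrices are symmetric, and a product of two
  symmetric matrices is symmetric exactly when they commute, because \<open>(A B)\<^sup>T = B A\<close>.\<close>

lemma BlockDiag_carrier: "x \<in> carrier_mat n m \<Longrightarrow> BlockDiag ns x \<in> carrier_mat n m"
  unfolding BlockDiag_def by auto

lemma transpose_BlockDiag: "transpose_mat (BlockDiag ns x) = BlockDiag ns (transpose_mat x)"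
  by (rule eq_matI) (auto simp: BlockDiag_def)

lemma BlockDiag_Sym: "x \<in> Sym p \<Longrightarrow> BlockDiag ns x \<in> Sym p"
  unfolding Sym_def by (simp add: BlockDiag_carrier transpose_BlockDiag)

lemma Sym_mult_commute:
  assumes "A \<in> Sym n" and "B \<in> Sym n" and "A * B \<in> Sym n"
  shows "A * B = B * A"
proof -
  have "A * B = transpose_mat (A * B)"
    using assms(3) unfolding Sym_def by simp
  also have "\<dots> = transpose_mat B * transpose_mat A"
    using assms(1,2) unfolding Sym_def by (blast intro: transpose_mult)
  also have "\<dots> = B * A"
    using assms(1,2) unfolding Sym_def by simp
  finally show ?thesis .
qed

theorem corollary4p4:
  fixes p :: nat and ns :: "nat list" and Z :: "real mat set"
  assumes "ordered_partition ns p"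
    and "linear_subspace p Z"
    and "Z \<subseteq> Sym p"
    and "\<forall>x\<in>Z. \<forall>y\<in>Z. BlockDiag ns x * BlockDiag ns y \<in> Z"
  shows "\<forall>x\<in>Z. \<forall>y\<in>Z. BlockDiag ns x * BlockDiag ns y = BlockDiag ns y * BlockDiag ns x"
proof (intro ballI)
  fix x y assume "x \<in> Z" and "y \<in> Z"
  with assms(3,4) show "BlockDiag ns x * BlockDiag ns y = BlockDiag ns y * BlockDiag ns x"
    by (intro Sym_mult_commute BlockDiag_Sym) auto
qed

end
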